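(* Let $\mathbf V$, $\mathbf V'$ be right vector spaces over (not necessarily commutative) fields $K$, $K'$, and let $\varphi:\mathcal P(\mathbf V)\dashrightarrow\mathcal P(\mathbf V')$ be a weak linear mapping such that $\operatorname{im}\varphi$ contains a triangle (three non-collinear points). Assume moreover that every field monomorphism $K\to K'$ is surjective. Then $\varphi$ is a linear mapping.
   Context: The projective space on a right vector space $\mathbf V$ over a skew field $K$ has point set $\mathcal P(\mathbf V)$ = set of one-dimensional subspaces, and lines = sets of points contained in a two-dimensional subspace. $\vee$ denotes join (span) of subspaces; for distinct points $X,Y$, $\{X\}\vee\{Y\}$ is the line through them, with conventions $\emptyset\vee\mathcal S=\mathcal S$ and $\{Z\}\vee\{Z\}=\{Z\}$. A partially defined mapping $\varphi:\mathcal P\dashrightarrow\mathcal P'$ has domain $\operatorname{dom}\varphi$, image set $\operatorname{im}\varphi$, exceptional set $\operatorname{ex}\varphi=\mathcal P\setminus\operatorname{dom}\varphi$; for $\mathcal M\subset\mathcal P$, $\mathcal M^\varphi:=\{X^\varphi:X\in\mathcal M\cap\operatorname{dom}\varphi\}$. $\varphi$ is weak linear if $(\{X\}\vee\{Y\})^\varphi\subset\{X\}^\varphi\vee\{Y\}^\varphi$ for all distinct points $X,Y$. $\varphi$ is linear if (L1) $(\{X\}\vee\{Y\})^\varphi=\{X\}^\varphi\vee\{Y\}^\varphi$ for all distinct points $X,Y$, and (L2) whenever $X^\varphi=Y^\varphi$ for distinct $X,Y\in\operatorname{dom}\varphi$, the line $\{X\}\vee\{Y\}$ contains a point of $\operatorname{ex}\varphi$.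 *)

theory Defs
  imports Main
begin

definition right_vs :: "('v::ab_group_add \<Rightarrow> 'k::division_ring \<Rightarrow> 'v) \<Rightarrow> bool" where
  "right_vs sm \<longleftrightarrow>
     (\<forall>v. sm v 1 = v) \<and>
     (\<forall>v a b. sm v (a * b) = sm (sm v a) b) \<and>
     (\<forall>v w a. sm (v + w) a = sm v a + sm w a) \<and>
     (\<forall>v a b. sm v (a + b) = sm v a + sm v b)"

definition subspace_r :: "('v::ab_group_add \<Rightarrow> 'k::division_ring \<Rightarrow> 'v) \<Rightarrow> 'v set \<Rightarrow> bool" where
  "subspace_r sm U \<longleftrightarrow> 0 \<in> U \<and> (\<forall>x\<in>U. \<forall>y\<in>U. x + y \<in> U) \<and> (\<forall>x\<in>U. \<forall>a. sm x a \<in> U)"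

definition span_r :: "('v::ab_group_add \<Rightarrow> 'k::division_ring \<Rightarrow> 'v) \<Rightarrow> 'v set \<Rightarrow> 'v set" where
  "span_r sm A = \<Inter>{U. subspace_r sm U \<and> A \<subseteq> U}"

definition proj_points :: "('v::ab_group_add \<Rightarrow> 'k::division_ring \<Rightarrow> 'v) \<Rightarrow> 'v set set" where
  "proj_points sm = {span_r sm {v} | v. v \<noteq> 0}"

text \<open>Join of two sets of points: all points contained in the subspace spanned by them.
This gives the line through two distinct points, and the conventions
empty-join-S = S and {Z} join {Z} = {Z}.\<close>
definition pjoin :: "('v::ab_group_add \<Rightarrow> 'k::division_ring \<Rightarrow> 'v) \<Rightarrow> 'v set set \<Rightarrow> 'v set set \<Rightarrow> 'v set set" where
  "pjoin sm S T = {P \<in> proj_points sm. P \<subseteq> span_r sm (\<Union>S \<union> \<Union>T)}"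

text \<open>A partially defined map is given by its domain D (a set of points) and
a function f defined on D. Image of a set of points M:\<close>
definition pimg :: "'a set \<Rightarrow> ('a \<Rightarrow> 'b) \<Rightarrow> 'a set \<Rightarrow> 'b set" where
  "pimg D f M = f ` (M \<inter> D)"

definition partial_map ::
  "('v::ab_group_add \<Rightarrow> 'k::division_ring \<Rightarrow> 'v) \<Rightarrow> ('w::ab_group_add \<Rightarrow> 'k2::division_ring \<Rightarrow> 'w)
   \<Rightarrow> 'v set set \<Rightarrow> ('v set \<Rightarrow> 'w set) \<Rightarrow> bool" where
  "partial_map sm sm' D f \<longleftrightarrow> D \<subseteq> proj_points sm \<and> f ` D \<subseteq> proj_points sm'"

definition weak_linear ::
  "('v::ab_group_add \<Rightarrow> 'k::division_ring \<Rightarrow> 'v) \<Rightarrow> ('w::ab_group_add \<Rightarrow> 'k2::division_ring \<Rightarrow> 'w)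
   \<Rightarrow> 'v set set \<Rightarrow> ('v set \<Rightarrow> 'w set) \<Rightarrow> bool" where
  "weak_linear sm sm' D f \<longleftrightarrow>
     (\<forall>X\<in>proj_points sm. \<forall>Y\<in>proj_points sm. X \<noteq> Y \<longrightarrow>
        pimg D f (pjoin sm {X} {Y}) \<subseteq> pjoin sm' (pimg D f {X}) (pimg D f {Y}))"

definition linear_map ::
  "('v::ab_group_add \<Rightarrow> 'k::division_ring \<Rightarrow> 'v) \<Rightarrow> ('w::ab_group_add \<Rightarrow> 'k2::division_ring \<Rightarrow> 'w)
   \<Rightarrow> 'v set set \<Rightarrow> ('v set \<Rightarrow> 'w set) \<Rightarrow> bool" where
  "linear_map sm sm' D f \<longleftrightarrow>
     (\<forall>X\<in>proj_points sm. \<forall>Y\<in>proj_points sm. X \<noteq> Y \<longrightarrow>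
        pimg D f (pjoin sm {X} {Y}) = pjoin sm' (pimg D f {X}) (pimg D f {Y})) \<and>
     (\<forall>X\<in>D. \<forall>Y\<in>D. X \<noteq> Y \<and> f X = f Y \<longrightarrow>
        (\<exists>Z\<in>pjoin sm {X} {Y}. Z \<in> proj_points sm - D))"

definition triangle :: "('w::ab_group_add \<Rightarrow> 'k2::division_ring \<Rightarrow> 'w) \<Rightarrow> 'w set \<Rightarrow> 'w set \<Rightarrow> 'w set \<Rightarrow> bool" where
  "triangle sm' A B C \<longleftrightarrow> A \<in> proj_points sm' \<and> B \<in> proj_points sm' \<and> C \<in> proj_points sm' \<and>
     A \<noteq> B \<and> C \<notin> pjoin sm' {A} {B}"

definition ring_mono :: "('k::division_ring \<Rightarrow> 'k2::division_ring) \<Rightarrow> bool" where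
  "ring_mono g \<longleftrightarrow> inj g \<and> (\<forall>a b. g (a + b) = g a + g b) \<and> (\<forall>a b. g (a * b) = g a * g b) \<and> g 1 = 1"

end

theory Submission
  imports Defs
begin

text \<open>Choose points x, y, z in the domain whose images form a triangle, and representatives
x', y', z' of their images normalised so that x + y and x + z are mapped to the points of
x' + y' and x' + z'. Weak linearity forces the point of x a + y to be mapped to the point of
x' \<sigma>(a) + y' for a unique \<sigma>(a), and computing the images of further points of the plane
spanned by x, y, z in two ways shows that \<sigma> is a field monomorphism K \<rightarrow> K'. By hypothesis
\<sigma> is onto, so every point of the line through f(x) and f(y) is an image of a point of the line
through x and y; this is the equality required of a linear map. If f collapsed a line lying
entirely in the domain to a single point f(x), a point z with f(z) \<noteq> f(x) together with this
surjectivity produces a second image value on that line, a contradiction.\<close>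

lemma pimg_singleton: "pimg D f {X} = (if X \<in> D then {f X} else {})" by (auto simp: pimg_def)

locale right_vector_space =
  fixes sm :: "'v::ab_group_add \<Rightarrow> 'k::division_ring \<Rightarrow> 'v"
  assumes right_vector_space: "right_vs sm"
begin

lemma sm_one[simp]: "sm v 1 = v" using right_vector_space unfolding right_vs_def by blast
lemma sm_assoc[simp]: "sm (sm v a) b = sm v (a*b)" using right_vector_space unfolding right_vs_def by metis
lemma sm_add_vec[simp]: "sm (v+w) a = sm v a + sm w a" using right_vector_space unfolding right_vs_def by blast
lemma sm_add_scalar[simp]: "sm v (a+b) = sm v a + sm v b" using right_vector_space unfolding right_vs_def by blast
lemma sm_zero_scalar[simp]: "sm v 0 = 0"
  using sm_add_scalar[of v 0 0] by simp
lemma sm_zero_vec[simp]: "sm 0 a = 0"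
  using sm_add_vec[of 0 0 a] by simp
lemma sm_neg_scalar[simp]: "sm v (-a) = - sm v a"
proof -
  have "sm v a + sm v (-a) = 0" using sm_add_scalar[of v a "-a"] by simp
  then show ?thesis by (metis add_eq_0_iff)
qed
lemma sm_neg_vec[simp]: "sm (-v) a = - sm v a"
proof -
  have "sm v a + sm (-v) a = 0" using sm_add_vec[of v "-v" a] by simp
  then show ?thesis by (metis add_eq_0_iff)
qed
lemma sm_diff_vec[simp]: "sm (v - w) a = sm v a - sm w a"
  using sm_add_vec[of v "-w" a] by simp
lemma sm_diff_scalar[simp]: "sm v (a - b) = sm v a - sm v b"
  using sm_add_scalar[of v a "-b"] by simp
lemma sm_eq_0_iff[simp]: "sm v a = 0 \<longleftrightarrow> v = 0 \<or> a = 0"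
proof
  assume h: "sm v a = 0"
  show "v = 0 \<or> a = 0"
  proof (cases "a = 0")
    case False
    have "v = sm (sm v a) (inverse a)" using False by simp
    then show ?thesis using h by simp
  qed simp
qed auto

definition point where "point v = span_r sm {v}"
definition span2 where "span2 u w = {sm u a + sm w b | a b. True}"

lemma subspace_span2: "subspace_r sm (span2 u w)"
  unfolding subspace_r_def span2_def
proof (intro conjI ballI allI)
  show "0 \<in> {sm u a + sm w b |a b. True}" by (rule CollectI, rule exI[of _ 0], rule exI[of _ 0]) simp
next
  fix p q assume "p \<in> {sm u a + sm w b |a b. True}" "q \<in> {sm u a + sm w b |a b. True}"
  then obtain a b c d where "p = sm u a + sm w b" "q = sm u c + sm w d" by blast
  then have "p + q = sm u (a+c) + sm w (b+d)" by (simp add: algebra_simps)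
  then show "p + q \<in> {sm u a + sm w b |a b. True}" by blast
next
  fix p k assume "p \<in> {sm u a + sm w b |a b. True}"
  then obtain a b where "p = sm u a + sm w b" by blast
  then have "sm p k = sm u (a*k) + sm w (b*k)" by simp
  then show "sm p k \<in> {sm u a + sm w b |a b. True}" by blast
qed

lemma span2_mem: "sm u a + sm w b \<in> span2 u w" unfolding span2_def by blast
lemma span2_memE: "p \<in> span2 u w \<Longrightarrow> (\<And>a b. p = sm u a + sm w b \<Longrightarrow> P) \<Longrightarrow> P"
  unfolding span2_def by blast
lemma left_in_span2: "u \<in> span2 u w" using span2_mem[of u 1 w 0] by simp
lemma right_in_span2: "w \<in> span2 u w" using span2_mem[of u 0 w 1] by simp
lemma span2_sym: "span2 u w = span2 w u" unfolding span2_def by (auto simp: add.commute)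

lemma subspace_sm: "subspace_r sm S \<Longrightarrow> x \<in> S \<Longrightarrow> sm x a \<in> S"
  unfolding subspace_r_def by blast
lemma subspace_add: "subspace_r sm S \<Longrightarrow> x \<in> S \<Longrightarrow> y \<in> S \<Longrightarrow> x + y \<in> S"
  unfolding subspace_r_def by blast
lemma subspace_zero: "subspace_r sm S \<Longrightarrow> 0 \<in> S"
  unfolding subspace_r_def by blast

lemma span2_subset_subspace: "subspace_r sm S \<Longrightarrow> u \<in> S \<Longrightarrow> w \<in> S \<Longrightarrow> span2 u w \<subseteq> S"
  by (auto elim!: span2_memE intro!: subspace_add subspace_sm)

lemma span_least: "subspace_r sm S \<Longrightarrow> A \<subseteq> S \<Longrightarrow> span_r sm A \<subseteq> S"
  unfolding span_r_def by blast
lemma span_superset: "A \<subseteq> span_r sm A"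
  unfolding span_r_def by blast
lemma subspace_span: "subspace_r sm (span_r sm A)"
  unfolding span_r_def subspace_r_def by blast
lemma span_subspace: "subspace_r sm S \<Longrightarrow> span_r sm S = S"
  using span_least[of S S] span_superset[of S] by blast

lemma subspace_range: "subspace_r sm (range (sm v))"
  unfolding subspace_r_def
proof (intro conjI ballI allI)
  show "0 \<in> range (sm v)" using sm_zero_scalar[of v] by (metis rangeI)
next
  fix p q assume "p \<in> range (sm v)" "q \<in> range (sm v)"
  then obtain a b where "p = sm v a" "q = sm v b" by blast
  then show "p + q \<in> range (sm v)" by (metis sm_add_scalar rangeI)
next
  fix p k assume "p \<in> range (sm v)"
  then obtain a where "p = sm v a" by blast
  then show "sm p k \<in> range (sm v)" by (metis sm_assoc rangeI)
qed

lemma point_eq_range: "point v = range (sm v)"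
proof
  show "point v \<subseteq> range (sm v)" unfolding point_def
    by (rule span_least[OF subspace_range]) (metis rangeI sm_one singletonD subsetI)
  show "range (sm v) \<subseteq> point v" unfolding point_def
    using subspace_sm[OF subspace_span] span_superset[of "{v}"] by blast
qed

lemma sm_in_point: "sm v a \<in> point v" by (simp add: point_eq_range)
lemma self_in_point: "v \<in> point v" using sm_in_point[of v 1] by simp
lemma point_memE: "p \<in> point v \<Longrightarrow> (\<And>a. p = sm v a \<Longrightarrow> P) \<Longrightarrow> P" by (auto simp: point_eq_range)
lemma point_zero: "point 0 = {0}" by (auto simp: point_eq_range)
lemma subspace_point: "subspace_r sm (point v)" by (simp add: point_eq_range subspace_range)

lemma point_eqI: assumes "w \<in> point u" "w \<noteq> 0" shows "point w = point u"
proof -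
  obtain k where k: "w = sm u k" using assms(1) by (auto elim: point_memE)
  have "k \<noteq> 0" using k assms(2) by auto
  show ?thesis
  proof
    show "point w \<subseteq> point u" using k by (auto simp: point_eq_range)
    show "point u \<subseteq> point w"
    proof
      fix p assume "p \<in> point u"
      then obtain a where "p = sm u a" by (auto elim: point_memE)
      then have "p = sm w (inverse k * a)" using k \<open>k \<noteq> 0\<close> by (simp add: mult.assoc[symmetric])
      then show "p \<in> point w" by (simp add: sm_in_point)
    qed
  qed
qed

lemma point_sm: "k \<noteq> 0 \<Longrightarrow> v \<noteq> 0 \<Longrightarrow> point (sm v k) = point v"
  by (rule point_eqI) (auto simp: sm_in_point)

lemma point_eq_iff: assumes "u \<noteq> 0" shows "point u = point w \<longleftrightarrow> (\<exists>k. k \<noteq> 0 \<and> w = sm u k)"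
proof
  assume h: "point u = point w"
  have "w \<noteq> 0" using h assms self_in_point[of u] point_zero by auto
  moreover have "w \<in> point u" using h self_in_point by auto
  ultimately show "\<exists>k. k \<noteq> 0 \<and> w = sm u k" by (metis point_memE sm_zero_scalar)
next
  assume "\<exists>k. k \<noteq> 0 \<and> w = sm u k"
  then show "point u = point w" using point_sm assms by auto
qed

lemma point_subset_iff: "subspace_r sm S \<Longrightarrow> point v \<subseteq> S \<longleftrightarrow> v \<in> S"
  using self_in_point[of v] by (auto simp: point_eq_range intro: subspace_sm)

lemma span_two_points: "span_r sm (point u \<union> point w) = span2 u w"
proof
  show "span_r sm (point u \<union> point w) \<subseteq> span2 u w"
    by (rule span_least[OF subspace_span2])
       (auto simp: point_eq_range intro: span2_mem[of u _ w 0, simplified] span2_mem[of u 0 w, simplified])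
  show "span2 u w \<subseteq> span_r sm (point u \<union> point w)"
    by (rule span2_subset_subspace[OF subspace_span]) (use span_superset self_in_point in blast)+
qed

lemma span_empty: "span_r sm {} = {0}"
proof -
  have "subspace_r sm {0}" unfolding subspace_r_def by simp
  then show ?thesis using span_least[of "{0}" "{}"] subspace_zero[OF subspace_span[of "{}"]] by blast
qed

lemma proj_points_iff: "P \<in> proj_points sm \<longleftrightarrow> (\<exists>v. v \<noteq> 0 \<and> P = point v)"
  unfolding proj_points_def point_def by blast

lemma point_in_proj_points: "v \<noteq> 0 \<Longrightarrow> point v \<in> proj_points sm"
  using proj_points_iff by blast

lemma pjoin_points: "pjoin sm {point u} {point w} = {point p | p. p \<noteq> 0 \<and> p \<in> span2 u w}"
  unfolding pjoin_def using point_subset_iff[OF subspace_span2] by (auto simp: proj_points_iff span_two_points)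

lemma point_in_pjoin: "p \<noteq> 0 \<Longrightarrow> p \<in> span2 u w \<Longrightarrow> point p \<in> pjoin sm {point u} {point w}"
  unfolding pjoin_points by blast

lemma point_subset_point: "p \<noteq> 0 \<Longrightarrow> point p \<subseteq> point v \<longleftrightarrow> point p = point v"
  by (metis point_eqI self_in_point point_subset_iff subspace_point subset_refl)

lemma pjoin_point_empty: "u \<noteq> 0 \<Longrightarrow> pjoin sm {point u} {} = {point u}"
  unfolding pjoin_def using point_subset_point
  by (auto simp: proj_points_iff span_subspace[OF subspace_point])
lemma pjoin_empty_point: "u \<noteq> 0 \<Longrightarrow> pjoin sm {} {point u} = {point u}"
  unfolding pjoin_def using point_subset_point
  by (auto simp: proj_points_iff span_subspace[OF subspace_point])
lemma pjoin_point_self: "u \<noteq> 0 \<Longrightarrow> pjoin sm {point u} {point u} = {point u}"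
  unfolding pjoin_def using point_subset_point
  by (auto simp: proj_points_iff span_subspace[OF subspace_point])
lemma pjoin_empty_empty: "pjoin sm {} {} = {}"
  unfolding pjoin_def using self_in_point point_zero by (auto simp: proj_points_iff span_empty)

lemma independent2: assumes "u \<noteq> 0" "w \<noteq> 0" "point u \<noteq> point w" "sm u a + sm w b = 0"
  shows "a = 0 \<and> b = 0"
proof (cases "b = 0")
  case True then show ?thesis using assms by simp
next
  case False
  have "sm w b = sm u (-a)" using assms(4) by (simp add: add_eq_0_iff)
  then have "sm (sm w b) (inverse b) = sm u (- a * inverse b)" by simp
  then have "w = sm u (- a * inverse b)" using False by simp
  then have "w \<in> point u" by (metis sm_in_point)
  then show ?thesis using point_eqI assms by metis
qed

lemma span2_coeffs_unique: assumes "u \<noteq> 0" "w \<noteq> 0" "point u \<noteq> point w" "sm u a + sm w b = sm u a' + sm w b'"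
  shows "a = a' \<and> b = b'"
proof -
  have "sm u (a - a') + sm w (b - b') = 0" using assms(4) by (simp add: algebra_simps)
  from independent2[OF assms(1-3) this] show ?thesis by simp
qed

definition independent3 where
  "independent3 u w z \<longleftrightarrow> u \<noteq> 0 \<and> w \<noteq> 0 \<and> point u \<noteq> point w \<and> z \<notin> span2 u w"

lemma independent3_coeffs: assumes "independent3 u w z" "sm u a + sm w b + sm z c = 0"
  shows "a = 0 \<and> b = 0 \<and> c = 0"
proof (cases "c = 0")
  case True then show ?thesis using assms independent2[of u w a b] unfolding independent3_def by simp
next
  case False
  have "sm z c = sm u (-a) + sm w (-b)" using assms(2) by (simp add: add_eq_0_iff algebra_simps)
  then have "sm (sm z c) (inverse c) = sm u (-a * inverse c) + sm w (-b * inverse c)" by simp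
  then have "z = sm u (-a * inverse c) + sm w (-b * inverse c)" using False by simp
  then have "z \<in> span2 u w" by (metis span2_mem)
  then show ?thesis using assms(1) unfolding independent3_def by blast
qed

lemma span3_coeffs_unique: assumes "independent3 u w z" "sm u a + sm w b + sm z c = sm u a' + sm w b' + sm z c'"
  shows "a = a' \<and> b = b' \<and> c = c'"
proof -
  have "sm u (a - a') + sm w (b - b') + sm z (c - c') = 0" using assms(2) by (simp add: algebra_simps)
  from independent3_coeffs[OF assms(1) this] show ?thesis by simp
qed

lemma span2_exchange: assumes "a = sm u c + sm w d" "d \<noteq> 0" shows "w \<in> span2 u a"
proof -
  have "sm a (inverse d) + sm u (- c * inverse d) = w"
    using assms by (simp add: algebra_simps mult.assoc[symmetric])
  then show ?thesis using span2_mem[of a "inverse d" u "- c * inverse d"] span2_sym by metis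
qed

lemma span2_mono: "u \<in> span2 a b \<Longrightarrow> w \<in> span2 a b \<Longrightarrow> span2 u w \<subseteq> span2 a b"
  by (rule span2_subset_subspace[OF subspace_span2])

lemma span2_subset_span2: assumes "a \<in> span2 u w" "b \<in> span2 u w" "a \<noteq> 0" "b \<noteq> 0" "point a \<noteq> point b"
  shows "span2 u w \<subseteq> span2 a b"
proof -
  obtain c d where a: "a = sm u c + sm w d" using assms(1) by (auto elim: span2_memE)
  show ?thesis
  proof (cases "d = 0")
    case False
    then have "w \<in> span2 u a" using span2_exchange a by blast
    then have s1: "span2 u w \<subseteq> span2 a u" using span2_mono left_in_span2 right_in_span2 span2_sym by metis
    then have "b \<in> span2 a u" using assms(2) by blast
    then obtain e g where b: "b = sm a e + sm u g" by (auto elim: span2_memE)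
    have "g \<noteq> 0"
    proof
      assume "g = 0"
      then have "b \<in> point a" using b by (simp add: sm_in_point)
      then show False using point_eqI assms by metis
    qed
    then have "u \<in> span2 a b" using span2_exchange b by blast
    then have "span2 a u \<subseteq> span2 a b" using span2_mono left_in_span2 by metis
    then show ?thesis using s1 by blast
  next
    case True
    then have "c \<noteq> 0" using a assms(3) by auto
    have "sm a (inverse c) = u" using a True \<open>c \<noteq> 0\<close> by simp
    then have "u \<in> span2 w a" using span2_mem[of w 0 a "inverse c"] by simp
    then have s1: "span2 u w \<subseteq> span2 w a" using span2_mono left_in_span2 right_in_span2 by metis
    then have "b \<in> span2 w a" using assms(2) by blast
    then obtain e g where b: "b = sm w e + sm a g" by (auto elim: span2_memE)
    have "e \<noteq> 0"
    proof
      assume "e = 0"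
      then have "b \<in> point a" using b by (simp add: sm_in_point)
      then show False using point_eqI assms by metis
    qed
    then have "b = sm a g + sm w e" using b by (simp add: add.commute)
    then have "w \<in> span2 a b" using span2_exchange \<open>e \<noteq> 0\<close> by blast
    then have "span2 w a \<subseteq> span2 a b" using span2_mono left_in_span2 by metis
    then show ?thesis using s1 by blast
  qed
qed

lemma triangle_not_on_line:
  assumes "triangle sm A B C" "P \<in> proj_points sm" "Q \<in> proj_points sm"
    "A \<in> pjoin sm {P} {Q}" "B \<in> pjoin sm {P} {Q}" "C \<in> pjoin sm {P} {Q}"
  shows False
proof -
  obtain p q where pq: "p \<noteq> 0" "P = point p" "q \<noteq> 0" "Q = point q" using assms(2,3) proj_points_iff by metis
  obtain a b c where abc: "a \<noteq> 0" "A = point a" "b \<noteq> 0" "B = point b" "c \<noteq> 0" "C = point c"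
    using assms(1) proj_points_iff unfolding triangle_def by metis
  have l: "x \<noteq> 0 \<Longrightarrow> point x \<in> pjoin sm {point p} {point q} \<Longrightarrow> x \<in> span2 p q" for x
    unfolding pjoin_def using self_in_point by (auto simp: span_two_points)
  have "a \<in> span2 p q" "b \<in> span2 p q" "c \<in> span2 p q" using assms(4-6) abc pq l by auto
  moreover have "point a \<noteq> point b" using assms(1) abc unfolding triangle_def by auto
  ultimately have "c \<in> span2 a b" using span2_subset_span2 abc by blast
  then have "C \<in> pjoin sm {A} {B}" using point_in_pjoin abc by blast
  then show False using assms(1) unfolding triangle_def by blast
qed

end

locale weak_linear_map = V: right_vector_space sm + W: right_vector_space sm'
  for sm :: "'v::ab_group_add \<Rightarrow> 'k::division_ring \<Rightarrow> 'v"
  and sm' :: "'w::ab_group_add \<Rightarrow> 'k2::division_ring \<Rightarrow> 'w" +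
  fixes D :: "'v set set" and f :: "'v set \<Rightarrow> 'w set"
  assumes partial_map_f: "partial_map sm sm' D f" and weak_linear_f: "weak_linear sm sm' D f"
begin

abbreviation in_dom where "in_dom v \<equiv> v \<noteq> 0 \<and> V.point v \<in> D"

lemma image_point: "V.point v \<in> D \<Longrightarrow> \<exists>r. r \<noteq> 0 \<and> f (V.point v) = W.point r"
proof -
  assume "V.point v \<in> D"
  then have "f (V.point v) \<in> proj_points sm'" using partial_map_f unfolding partial_map_def by blast
  then show ?thesis using W.proj_points_iff by blast
qed

lemma dom_point: "X \<in> D \<Longrightarrow> \<exists>v. v \<noteq> 0 \<and> X = V.point v"
proof -
  assume "X \<in> D"
  then have "X \<in> proj_points sm" using partial_map_f unfolding partial_map_def by blast
  then show ?thesis using V.proj_points_iff by blast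
qed

lemma image_in_pjoin: assumes "u \<noteq> 0" "w \<noteq> 0" "V.point u \<noteq> V.point w" "p \<in> V.span2 u w" "in_dom p"
  shows "f (V.point p) \<in> pjoin sm' (pimg D f {V.point u}) (pimg D f {V.point w})"
proof -
  have "V.point p \<in> pjoin sm {V.point u} {V.point w}" using V.point_in_pjoin assms by blast
  then have "f (V.point p) \<in> pimg D f (pjoin sm {V.point u} {V.point w})" using assms(5) unfolding pimg_def by blast
  then show ?thesis using weak_linear_f assms(1-3) V.point_in_proj_points unfolding weak_linear_def by blast
qed

lemma image_in_span2: assumes "in_dom u" "in_dom w" "V.point u \<noteq> V.point w" "p \<in> V.span2 u w" "in_dom p"
  "f (V.point u) = W.point u'" "f (V.point w) = W.point w'" "u' \<noteq> 0" "w' \<noteq> 0"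
  shows "\<exists>c d. sm' u' c + sm' w' d \<noteq> 0 \<and> f (V.point p) = W.point (sm' u' c + sm' w' d)"
proof -
  have "f (V.point p) \<in> pjoin sm' {W.point u'} {W.point w'}"
    using image_in_pjoin[of u w p] assms by (simp add: pimg_singleton)
  then obtain q where q: "q \<noteq> 0" "q \<in> W.span2 u' w'" "f (V.point p) = W.point q" unfolding W.pjoin_points by blast
  then obtain c d where "q = sm' u' c + sm' w' d" by (auto elim: W.span2_memE)
  then show ?thesis using q by blast
qed

lemma collapsed_line_constant:
  assumes "in_dom u" "in_dom w" "V.point u \<noteq> V.point w" "f (V.point u) = f (V.point w)" "p \<in> V.span2 u w" "in_dom p"
  shows "f (V.point p) = f (V.point u)"
proof -
  obtain r where r: "r \<noteq> 0" "f (V.point u) = W.point r" using image_point assms(1) by blast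
  have "f (V.point p) \<in> pjoin sm' {W.point r} {W.point r}"
    using image_in_pjoin[of u w p] assms r by (simp add: pimg_singleton)
  then show ?thesis using W.pjoin_point_self r by auto
qed

lemma exceptional_line:
  assumes "u \<noteq> 0" "w \<noteq> 0" "V.point u \<notin> D" "V.point w \<notin> D" "V.point u \<noteq> V.point w" "p \<in> V.span2 u w" "p \<noteq> 0"
  shows "V.point p \<notin> D"
proof
  assume "V.point p \<in> D"
  then have "f (V.point p) \<in> pjoin sm' {} {}"
    using image_in_pjoin[of u w p] assms by (simp add: pimg_singleton)
  then show False using W.pjoin_empty_empty by simp
qed

lemma line_through_exceptional:
  assumes "u \<noteq> 0" "V.point u \<notin> D" "in_dom w" "V.point u \<noteq> V.point w" "p \<in> V.span2 u w" "in_dom p"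
  shows "f (V.point p) = f (V.point w)"
proof -
  obtain r where r: "r \<noteq> 0" "f (V.point w) = W.point r" using image_point assms(3) by blast
  have "f (V.point p) \<in> pjoin sm' {} {W.point r}"
    using image_in_pjoin[of u w p] assms r by (simp add: pimg_singleton)
  then show ?thesis using W.pjoin_empty_point r by auto
qed

lemma exceptional_absorb: assumes "u \<noteq> 0" "V.point u \<notin> D" "in_dom w"
  shows "in_dom (u + w) \<and> f (V.point (u + w)) = f (V.point w)"
proof -
  have ne: "V.point u \<noteq> V.point w" using assms by auto
  have nz: "u + w \<noteq> 0"
  proof
    assume "u + w = 0"
    then have "w = sm u (-1)" by (simp add: add_eq_0_iff)
    then have "V.point w = V.point u" using V.point_sm[of "-1" u] assms(1) by simp
    then show False using ne by simp
  qed
  have d: "V.point (u + w) \<in> D"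
  proof (rule ccontr)
    assume nd: "V.point (u + w) \<notin> D"
    have ne2: "V.point (u + w) \<noteq> V.point u"
    proof
      assume "V.point (u + w) = V.point u"
      then obtain k where "u + w = sm u k" using V.point_eq_iff assms(1) by metis
      then have "w = sm u (k - 1)" by (simp add: algebra_simps)
      then have "V.point w = V.point u" using V.point_eqI V.sm_in_point assms(3) by metis
      then show False using ne by simp
    qed
    have "w = sm (u + w) 1 + sm u (-1)" by simp
    then have "w \<in> V.span2 (u + w) u" using V.span2_mem by metis
    then have "V.point w \<notin> D" using exceptional_line[OF nz assms(1) nd assms(2) ne2] assms(3) by blast
    then show False using assms(3) by blast
  qed
  have "u + w \<in> V.span2 u w" using V.span2_mem[of u 1 w 1] by simp
  then show ?thesis using line_through_exceptional[OF assms(1,2,3) ne] nz d by blast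
qed

lemma line_in_dom_one_side: assumes "in_dom u" "in_dom w" "f (V.point u) \<noteq> f (V.point w)" "a \<noteq> 0" "b \<noteq> 0"
  "p = sm u a + sm w b"
  shows "in_dom p \<and> f (V.point p) \<noteq> f (V.point u)"
proof -
  have ne: "V.point u \<noteq> V.point w" using assms(3) by auto
  have nz: "p \<noteq> 0" using V.independent2[of u w a b] assms ne by auto
  have d: "V.point p \<in> D"
  proof (rule ccontr)
    assume nd: "V.point p \<notin> D"
    have "V.point (sm u (-a)) = V.point u" using V.point_sm[of "-a" u] assms by simp
    then have "in_dom (sm u (-a))" using assms by simp
    from exceptional_absorb[OF nz nd this] have "f (V.point (p + sm u (-a))) = f (V.point (sm u (-a)))" by blast
    moreover have "p + sm u (-a) = sm w b" using assms(6) by simp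
    ultimately have "f (V.point w) = f (V.point u)" using V.point_sm[of b w] V.point_sm[of "-a" u] assms by simp
    then show False using assms(3) by simp
  qed
  have "f (V.point p) \<noteq> f (V.point u)"
  proof
    assume eq: "f (V.point p) = f (V.point u)"
    have ne2: "V.point p \<noteq> V.point u"
    proof
      assume "V.point p = V.point u"
      then obtain k where "p = sm u k" using V.point_eq_iff assms(1) by metis
      then have "sm u a + sm w b = sm u k + sm w 0" using assms(6) by simp
      then show False using V.span2_coeffs_unique[of u w a b k 0] assms ne by simp
    qed
    have "w \<in> V.span2 p u" using V.span2_exchange[OF assms(6) assms(5)] V.span2_sym by metis
    then have "f (V.point w) = f (V.point p)" using collapsed_line_constant[of p u w] nz d assms ne2 eq by blast
    then show False using eq assms(3) by simp
  qed
  then show ?thesis using nz d by blast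
qed

lemma line_in_dom: assumes "in_dom u" "in_dom w" "f (V.point u) \<noteq> f (V.point w)" "a \<noteq> 0" "b \<noteq> 0"
  "p = sm u a + sm w b"
  shows "in_dom p \<and> f (V.point p) \<noteq> f (V.point u) \<and> f (V.point p) \<noteq> f (V.point w)"
  using line_in_dom_one_side[OF assms] line_in_dom_one_side[of w u b a p] assms by (simp add: add.commute)

lemma image_ne_point_ne: "f (V.point u) \<noteq> f (V.point w) \<Longrightarrow> V.point u \<noteq> V.point w" by auto

lemma normalize_image: assumes "in_dom u" "in_dom w" "f (V.point u) \<noteq> f (V.point w)" "f (V.point u) = W.point u'" "u' \<noteq> 0"
  shows "\<exists>w'. w' \<noteq> 0 \<and> f (V.point w) = W.point w' \<and> f (V.point (u + w)) = W.point (u' + w') \<and> in_dom (u + w)"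
proof -
  obtain w0 where w0: "w0 \<noteq> 0" "f (V.point w) = W.point w0" using image_point assms(2) by blast
  have ld: "in_dom (u + w) \<and> f (V.point (u + w)) \<noteq> f (V.point u) \<and> f (V.point (u + w)) \<noteq> f (V.point w)"
    using line_in_dom[OF assms(1-3), of 1 1 "u + w"] by simp
  have "u + w \<in> V.span2 u w" using V.span2_mem[of u 1 w 1] by simp
  then obtain c d where cd: "sm' u' c + sm' w0 d \<noteq> 0" "f (V.point (u + w)) = W.point (sm' u' c + sm' w0 d)"
    using image_in_span2[of u w "u + w" u' w0] assms ld w0 image_ne_point_ne by blast
  have c: "c \<noteq> 0"
  proof
    assume "c = 0"
    then have "f (V.point (u + w)) = W.point (sm' w0 d)" "d \<noteq> 0" using cd by auto
    then have "f (V.point (u + w)) = f (V.point w)" using W.point_sm[of d w0] w0 by simp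
    then show False using ld by simp
  qed
  have d: "d \<noteq> 0"
  proof
    assume "d = 0"
    then have "f (V.point (u + w)) = W.point (sm' u' c)" using cd by auto
    then have "f (V.point (u + w)) = f (V.point u)" using W.point_sm[of c u'] c assms by simp
    then show False using ld by simp
  qed
  define w' where "w' = sm' w0 (d * inverse c)"
  have e: "sm' (u' + w') c = sm' u' c + sm' w0 d" unfolding w'_def using c by (simp add: mult.assoc)
  have nz: "u' + w' \<noteq> 0" using e cd by (metis W.sm_zero_vec)
  have "W.point (sm' u' c + sm' w0 d) = W.point (u' + w')" using e W.point_sm[of c "u' + w'"] c nz by simp
  moreover have "W.point w' = W.point w0" unfolding w'_def using W.point_sm c d w0 by simp
  moreover have "w' \<noteq> 0" unfolding w'_def using c d w0 by simp
  ultimately show ?thesis using cd w0 ld by auto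
qed

end

locale frame = weak_linear_map +
  fixes x y z x' y' z'
  assumes in_dom_x: "in_dom x" and in_dom_y: "in_dom y" and in_dom_z: "in_dom z"
    and fx: "f (V.point x) = W.point x'" and fy: "f (V.point y) = W.point y'" and fz: "f (V.point z) = W.point z'"
    and fxy: "f (V.point (x + y)) = W.point (x' + y')" and fxz: "f (V.point (x + z)) = W.point (x' + z')"
    and independent: "W.independent3 x' y' z'"
begin

definition coords where "coords a b c = sm' x' a + sm' y' b + sm' z' c"

lemma coords_eq_iff[simp]: "coords a b c = coords a' b' c' \<longleftrightarrow> a = a' \<and> b = b' \<and> c = c'"
  unfolding coords_def using W.span3_coeffs_unique[OF independent] by blast

lemma coords_eq_0[simp]: "coords a b c = 0 \<longleftrightarrow> a = 0 \<and> b = 0 \<and> c = 0"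
proof -
  have "0 = coords 0 0 0" unfolding coords_def by simp
  then show ?thesis by (metis coords_eq_iff)
qed

lemma coords_sm[simp]: "sm' (coords a b c) k = coords (a*k) (b*k) (c*k)"
  unfolding coords_def by simp

lemma coords_add[simp]: "coords a b c + coords a' b' c' = coords (a+a') (b+b') (c+c')"
  unfolding coords_def by (simp add: algebra_simps)

lemma x'_coords: "x' = coords 1 0 0" and y'_coords: "y' = coords 0 1 0" and z'_coords: "z' = coords 0 0 1"
  and xy'_coords: "x' + y' = coords 1 1 0" and xz'_coords: "x' + z' = coords 1 0 1"
  unfolding coords_def by simp_all

lemma point_coords_eq: "coords a b c \<noteq> 0 \<Longrightarrow> W.point (coords a b c) = W.point (coords a' b' c') \<longleftrightarrow>
   (\<exists>k. k \<noteq> 0 \<and> a' = a*k \<and> b' = b*k \<and> c' = c*k)"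
  using W.point_eq_iff[of "coords a b c" "coords a' b' c'"] by simp

lemma point_coords_scale:
  "k \<noteq> 0 \<Longrightarrow> coords a b c \<noteq> 0 \<Longrightarrow> W.point (coords (a*k) (b*k) (c*k)) = W.point (coords a b c)"
  using W.point_sm[of k "coords a b c"] by simp

lemma point_coords_eqE: assumes "W.point (coords a b c) = W.point (coords a' b' c')" "coords a b c \<noteq> 0"
  obtains k where "k \<noteq> 0" "a' = a*k" "b' = b*k" "c' = c*k"
  using assms point_coords_eq by metis

lemma fx_coords: "f (V.point x) = W.point (coords 1 0 0)" and fy_coords: "f (V.point y) = W.point (coords 0 1 0)"
  and fz_coords: "f (V.point z) = W.point (coords 0 0 1)" and fxy_coords: "f (V.point (x + y)) = W.point (coords 1 1 0)"
  and fxz_coords: "f (V.point (x + z)) = W.point (coords 1 0 1)"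
  using fx fy fz fxy fxz x'_coords y'_coords z'_coords xy'_coords xz'_coords by simp_all

lemma image_in_span2_coords: assumes "in_dom u" "in_dom w" "V.point u \<noteq> V.point w"
  "f (V.point u) = W.point (coords a1 b1 c1)" "f (V.point w) = W.point (coords a2 b2 c2)"
  "coords a1 b1 c1 \<noteq> 0" "coords a2 b2 c2 \<noteq> 0" "p = sm u s + sm w t" "in_dom p"
  shows "\<exists>k1 k2. coords (a1*k1+a2*k2) (b1*k1+b2*k2) (c1*k1+c2*k2) \<noteq> 0 \<and>
     f (V.point p) = W.point (coords (a1*k1+a2*k2) (b1*k1+b2*k2) (c1*k1+c2*k2))"
proof -
  have "p \<in> V.span2 u w" using assms(8) V.span2_mem by simp
  from image_in_span2[OF assms(1-3) this assms(9,4,5,6,7)] show ?thesis by simp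
qed

lemma in_dom_comb: assumes "in_dom u" "in_dom w" "f (V.point u) \<noteq> f (V.point w)" "s \<noteq> 0" "t \<noteq> 0"
  shows "in_dom (sm u s + sm w t)"
  using line_in_dom[OF assms, of "sm u s + sm w t"] by simp

lemma point_coords_neI:
  assumes "coords a b c \<noteq> 0"
    "\<And>k. k \<noteq> 0 \<Longrightarrow> a' = a*k \<Longrightarrow> b' = b*k \<Longrightarrow> c' = c*k \<Longrightarrow> False"
  shows "W.point (coords a b c) \<noteq> W.point (coords a' b' c')"
  using assms point_coords_eq by metis

lemma coords_nonzero: "coords 1 0 0 \<noteq> 0" "coords 0 1 0 \<noteq> 0" "coords 0 0 1 \<noteq> 0" "coords 1 1 0 \<noteq> 0" "coords 1 0 1 \<noteq> 0"
  "coords 1 1 1 \<noteq> 0" "coords 0 1 1 \<noteq> 0" "coords a 1 0 \<noteq> 0" "coords a 0 1 \<noteq> 0" "coords a 1 1 \<noteq> 0" "coords a b 1 \<noteq> 0"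
  by simp_all

lemma point_100_ne_010: "W.point (coords 1 0 0) \<noteq> W.point (coords 0 1 0)" by (rule point_coords_neI) auto
lemma point_100_ne_001: "W.point (coords 1 0 0) \<noteq> W.point (coords 0 0 1)" by (rule point_coords_neI) auto
lemma point_010_ne_001: "W.point (coords 0 1 0) \<noteq> W.point (coords 0 0 1)" by (rule point_coords_neI) auto
lemma point_110_ne_001: "W.point (coords 1 1 0) \<noteq> W.point (coords 0 0 1)" by (rule point_coords_neI) auto
lemma point_101_ne_010: "W.point (coords 1 0 1) \<noteq> W.point (coords 0 1 0)" by (rule point_coords_neI) auto
lemma point_011_ne_100: "W.point (coords 0 1 1) \<noteq> W.point (coords 1 0 0)" by (rule point_coords_neI) auto

lemma in_dom_xy: "in_dom (x + y)" using in_dom_comb[OF in_dom_x in_dom_y, of 1 1] point_100_ne_010 by (simp add: fx_coords fy_coords)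
lemma in_dom_xz: "in_dom (x + z)" using in_dom_comb[OF in_dom_x in_dom_z, of 1 1] point_100_ne_001 by (simp add: fx_coords fz_coords)
lemma in_dom_yz: "in_dom (y + z)" using in_dom_comb[OF in_dom_y in_dom_z, of 1 1] point_010_ne_001 by (simp add: fy_coords fz_coords)

lemma in_dom_xyz: "in_dom (x + y + z)" and image_xyz: "f (V.point (x + y + z)) = W.point (coords 1 1 1)"
proof -
  have d: "in_dom (x + y + z)" using in_dom_comb[OF in_dom_xy in_dom_z, of 1 1] point_110_ne_001 by (simp add: fxy_coords fz_coords)
  have "V.point (x + y) \<noteq> V.point z" using point_110_ne_001 fxy_coords fz_coords by auto
  then obtain k1 k2 where r1: "coords k1 k1 k2 \<noteq> 0" "f (V.point (x+y+z)) = W.point (coords k1 k1 k2)"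
    using image_in_span2_coords[OF in_dom_xy in_dom_z _ fxy_coords fz_coords _ _ _ d, of 1 1] by auto
  have "V.point (x + z) \<noteq> V.point y" using point_101_ne_010 fxz_coords fy_coords by auto
  then obtain m1 m2 where r2: "f (V.point (x+y+z)) = W.point (coords m1 m2 m1)"
    using image_in_span2_coords[OF in_dom_xz in_dom_y _ fxz_coords fy_coords _ _ _ d, of 1 1] by (auto simp: algebra_simps)
  obtain k where k: "k \<noteq> 0" "m1 = k1*k" "m2 = k1*k" "m1 = k2*k"
    using point_coords_eqE[OF _ r1(1)] r1(2) r2 by metis
  have "k2 = k1" using k by simp
  then have "k1 \<noteq> 0" using r1 by auto
  then show "in_dom (x + y + z)" "f (V.point (x + y + z)) = W.point (coords 1 1 1)"
    using d r1 \<open>k2 = k1\<close> point_coords_scale[of k1 1 1 1] by simp_all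
qed

lemma image_yz: "f (V.point (y + z)) = W.point (coords 0 1 1)"
proof -
  have "V.point y \<noteq> V.point z" using point_010_ne_001 fy_coords fz_coords by auto
  then obtain k1 k2 where r1: "coords 0 k1 k2 \<noteq> 0" "f (V.point (y + z)) = W.point (coords 0 k1 k2)"
    using image_in_span2_coords[OF in_dom_y in_dom_z _ fy_coords fz_coords _ _ _ in_dom_yz, of 1 1] by auto
  have "W.point (coords 1 1 1) \<noteq> W.point (coords 1 0 0)" by (rule point_coords_neI) auto
  then have ne2: "V.point (x + y + z) \<noteq> V.point x" using image_xyz fx_coords by auto
  have eq: "y + z = sm (x + y + z) 1 + sm x (-1)" by (simp add: algebra_simps)
  obtain m1 m2 where r2: "f (V.point (y + z)) = W.point (coords (m1 + m2) m1 m1)"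
    using image_in_span2_coords[OF in_dom_xyz in_dom_x ne2 image_xyz fx_coords coords_nonzero(6) coords_nonzero(1) eq in_dom_yz] by auto
  obtain k where k: "k \<noteq> 0" "m1 + m2 = 0*k" "m1 = k1*k" "m1 = k2*k"
    using point_coords_eqE[OF _ r1(1)] r1(2) r2 by metis
  have "k2 = k1" using k by simp
  then have "k1 \<noteq> 0" using r1 by auto
  then show ?thesis using r1 \<open>k2 = k1\<close> point_coords_scale[of k1 0 1 1] by simp
qed

lemma point_coords_y1_eq: "W.point (coords s 1 c) = W.point (coords t 1 c') \<Longrightarrow> s = t \<and> c = c'"
  by (erule point_coords_eqE) auto
definition sigma where "sigma a = (THE s. f (V.point (sm x a + y)) = W.point (coords s 1 0))"

lemma in_dom_sigma_xy: "in_dom (sm x a + y)" and image_sigma_xy: "f (V.point (sm x a + y)) = W.point (coords (sigma a) 1 0)"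
proof -
  have ex: "\<exists>s. in_dom (sm x a + y) \<and> f (V.point (sm x a + y)) = W.point (coords s 1 0)"
  proof (cases "a = 0")
    case True then show ?thesis using in_dom_y fy_coords by auto
  next
    case False
    have fne: "f (V.point x) \<noteq> f (V.point y)" using point_100_ne_010 fx_coords fy_coords by simp
    have d: "in_dom (sm x a + y)" using in_dom_comb[OF in_dom_x in_dom_y fne False, of 1] by simp
    have ld: "f (V.point (sm x a + y)) \<noteq> f (V.point x)" using line_in_dom[OF in_dom_x in_dom_y fne False, of 1] by simp
    obtain k1 k2 where r: "coords k1 k2 0 \<noteq> 0" "f (V.point (sm x a + y)) = W.point (coords k1 k2 0)"
      using image_in_span2_coords[OF in_dom_x in_dom_y image_ne_point_ne[OF fne] fx_coords fy_coords _ _ _ d, of a 1] by auto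
    have "k2 \<noteq> 0"
    proof
      assume "k2 = 0"
      then have "k1 \<noteq> 0" using r by auto
      then have "W.point (coords k1 k2 0) = W.point (coords 1 0 0)" using \<open>k2 = 0\<close> point_coords_scale[of k1 1 0 0] by simp
      then show False using ld r fx_coords by simp
    qed
    then have "coords k1 k2 0 = coords ((k1 * inverse k2) * k2) (1*k2) (0*k2)" by (simp add: mult.assoc)
    then have "W.point (coords k1 k2 0) = W.point (coords (k1 * inverse k2) 1 0)"
      using point_coords_scale[OF \<open>k2 \<noteq> 0\<close>, of "k1 * inverse k2" 1 0] by simp
    then show ?thesis using d r by auto
  qed
  then obtain s where s: "in_dom (sm x a + y)" "f (V.point (sm x a + y)) = W.point (coords s 1 0)" by blast
  have "sigma a = s" unfolding sigma_def
  proof (rule the_equality)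
    fix t assume "f (V.point (sm x a + y)) = W.point (coords t 1 0)"
    then show "t = s" using s point_coords_y1_eq[of t 0 s 0] by simp
  qed (use s in simp)
  then show "in_dom (sm x a + y)" "f (V.point (sm x a + y)) = W.point (coords (sigma a) 1 0)" using s by simp_all
qed

lemma sigma_0: "sigma 0 = 0"
  using image_sigma_xy[of 0] fy_coords point_coords_y1_eq[of "sigma 0" 0 0 0] by simp

lemma sigma_1: "sigma 1 = 1"
  using image_sigma_xy[of 1] fxy_coords point_coords_y1_eq[of "sigma 1" 0 1 0] by simp

lemma in_dom_sigma_xyz: "in_dom (sm x a + y + z)"
  and image_sigma_xyz: "f (V.point (sm x a + y + z)) = W.point (coords (sigma a) 1 1)"
proof -
  have ne: "W.point (coords (sigma a) 1 0) \<noteq> W.point (coords 0 0 1)" by (rule point_coords_neI) auto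
  have d: "in_dom (sm x a + y + z)"
    using in_dom_comb[OF in_dom_sigma_xy[of a] in_dom_z, of 1 1] ne image_sigma_xy[of a] fz_coords by simp
  have "V.point (sm x a + y) \<noteq> V.point z" using ne image_sigma_xy[of a] fz_coords by auto
  then obtain k1 k2 where r1: "coords (sigma a * k1) k1 k2 \<noteq> 0" "f (V.point (sm x a + y + z)) = W.point (coords (sigma a * k1) k1 k2)"
    using image_in_span2_coords[OF in_dom_sigma_xy[of a] in_dom_z _ image_sigma_xy[of a] fz_coords _ _ _ d, of 1 1] by auto
  have ne2: "V.point (y + z) \<noteq> V.point x" using point_011_ne_100 image_yz fx_coords by auto
  have eq: "sm x a + y + z = sm (y + z) 1 + sm x a" by (simp add: algebra_simps)
  obtain m1 m2 where r2: "f (V.point (sm x a + y + z)) = W.point (coords m2 m1 m1)"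
    using image_in_span2_coords[OF in_dom_yz in_dom_x ne2 image_yz fx_coords coords_nonzero(7) coords_nonzero(1) eq d] by auto
  obtain k where k: "k \<noteq> 0" "m2 = sigma a * k1 * k" "m1 = k1*k" "m1 = k2*k"
    using point_coords_eqE[OF _ r1(1)] r1(2) r2 by metis
  have "k2 = k1" using k by simp
  then have "k1 \<noteq> 0" using r1 by auto
  then show "in_dom (sm x a + y + z)" "f (V.point (sm x a + y + z)) = W.point (coords (sigma a) 1 1)"
    using d r1 \<open>k2 = k1\<close> point_coords_scale[of k1 "sigma a" 1 1] by simp_all
qed

lemma in_dom_sigma_xz: "in_dom (sm x a + z)" and image_sigma_xz: "f (V.point (sm x a + z)) = W.point (coords (sigma a) 0 1)"
proof -
  have "in_dom (sm x a + z) \<and> f (V.point (sm x a + z)) = W.point (coords (sigma a) 0 1)"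
  proof (cases "a = 0")
    case True then show ?thesis using in_dom_z fz_coords sigma_0 by simp
  next
    case False
    have fne: "f (V.point x) \<noteq> f (V.point z)" using point_100_ne_001 fx_coords fz_coords by simp
    have d: "in_dom (sm x a + z)" using in_dom_comb[OF in_dom_x in_dom_z fne False, of 1] by simp
    obtain k1 k2 where r1: "coords k1 0 k2 \<noteq> 0" "f (V.point (sm x a + z)) = W.point (coords k1 0 k2)"
      using image_in_span2_coords[OF in_dom_x in_dom_z image_ne_point_ne[OF fne] fx_coords fz_coords _ _ _ d, of a 1] by auto
    have "W.point (coords k1 0 k2) \<noteq> W.point (coords 0 1 0)" by (rule point_coords_neI) (use r1 in auto)
    then have ne2: "V.point (sm x a + z) \<noteq> V.point y" using r1 fy_coords by auto
    have eq: "sm x a + y + z = sm (sm x a + z) 1 + sm y 1" by (simp add: algebra_simps)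
    obtain m1 m2 where r2: "f (V.point (sm x a + y + z)) = W.point (coords (k1 * m1) m2 (k2 * m1))"
      using image_in_span2_coords[OF d in_dom_y ne2 r1(2) fy_coords r1(1) coords_nonzero(2) eq in_dom_sigma_xyz[of a]] by auto
    obtain k where k: "k \<noteq> 0" "k1 * m1 = sigma a * k" "m2 = 1 * k" "k2 * m1 = 1 * k"
      using point_coords_eqE[OF _ coords_nonzero(10)[of "sigma a"]] image_sigma_xyz[of a] r2 by metis
    have "m1 \<noteq> 0" using k by auto
    have "k1 * m1 = (sigma a * k2) * m1" using k by (simp add: mult.assoc)
    then have e: "k1 = sigma a * k2" using \<open>m1 \<noteq> 0\<close> by simp
    then have "k2 \<noteq> 0" using r1 by auto
    then show ?thesis
      using d r1 e point_coords_scale[of k2 "sigma a" 0 1] by simp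
  qed
  then show "in_dom (sm x a + z)" "f (V.point (sm x a + z)) = W.point (coords (sigma a) 0 1)" by simp_all
qed

lemma sigma_add: "sigma (a + b) = sigma a + sigma b"
proof -
  have ne: "W.point (coords (sigma a) 1 0) \<noteq> W.point (coords (sigma b) 0 1)" by (rule point_coords_neI) auto
  then have ne2: "V.point (sm x a + y) \<noteq> V.point (sm x b + z)" using image_sigma_xy[of a] image_sigma_xz[of b] by auto
  have eq: "sm x (a + b) + y + z = sm (sm x a + y) 1 + sm (sm x b + z) 1" by (simp add: algebra_simps)
  obtain k1 k2 where r: "f (V.point (sm x (a + b) + y + z)) = W.point (coords (sigma a * k1 + sigma b * k2) k1 k2)"
    using image_in_span2_coords[OF in_dom_sigma_xy[of a] in_dom_sigma_xz[of b] ne2 image_sigma_xy[of a]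
        image_sigma_xz[of b] coords_nonzero(8) coords_nonzero(9) eq in_dom_sigma_xyz[of "a+b"]] by auto
  obtain k where k: "k \<noteq> 0" "sigma a * k1 + sigma b * k2 = sigma (a + b) * k" "k1 = 1 * k" "k2 = 1 * k"
    using point_coords_eqE[OF _ coords_nonzero(10)[of "sigma (a+b)"]] image_sigma_xyz[of "a+b"] r by metis
  then have "(sigma a + sigma b) * k = sigma (a + b) * k" by (simp add: distrib_right)
  then show ?thesis using k(1) by simp
qed

lemma
  assumes "b \<noteq> 0"
  shows in_dom_sigma_diag: "in_dom (sm x b + sm y b + z)"
    and image_sigma_diag: "f (V.point (sm x b + sm y b + z)) = W.point (coords (sigma b) (sigma b) 1)"
proof -
  define R where "R = sm x b + sm y b + z"
  have fne1: "f (V.point (x + y)) \<noteq> f (V.point z)" using point_110_ne_001 fxy_coords fz_coords by simp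
  have eqR1: "R = sm (x + y) b + sm z 1" unfolding R_def by simp
  have dR: "in_dom R" using in_dom_comb[OF in_dom_xy in_dom_z fne1 assms, of 1] eqR1 by simp
  obtain k1 k2 where r1: "coords k1 k1 k2 \<noteq> 0" "f (V.point R) = W.point (coords k1 k1 k2)"
    using image_in_span2_coords[OF in_dom_xy in_dom_z image_ne_point_ne[OF fne1] fxy_coords fz_coords
        coords_nonzero(4) coords_nonzero(3) eqR1 dR] by auto
  have "W.point (coords (sigma b) 0 1) \<noteq> W.point (coords 0 1 0)" by (rule point_coords_neI) auto
  then have ne2: "V.point (sm x b + z) \<noteq> V.point y" using image_sigma_xz[of b] fy_coords by auto
  have eqR2: "R = sm (sm x b + z) 1 + sm y b" unfolding R_def by (simp add: algebra_simps)
  obtain m1 m2 where r2: "f (V.point R) = W.point (coords (sigma b * m1) m2 m1)"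
    using image_in_span2_coords[OF in_dom_sigma_xz[of b] in_dom_y ne2 image_sigma_xz[of b] fy_coords
        coords_nonzero(9) coords_nonzero(2) eqR2 dR] by auto
  obtain k where k: "k \<noteq> 0" "sigma b * m1 = k1 * k" "m2 = k1 * k" "m1 = k2 * k"
    using point_coords_eqE[OF _ r1(1)] r1(2) r2 by metis
  have "k1 * k = (sigma b * k2) * k" using k by (simp add: mult.assoc)
  then have ek: "k1 = sigma b * k2" using k(1) by simp
  then have "k2 \<noteq> 0" using r1 by auto
  then show "in_dom (sm x b + sm y b + z)"
    and "f (V.point (sm x b + sm y b + z)) = W.point (coords (sigma b) (sigma b) 1)"
    using dR r1 ek point_coords_scale[of k2 "sigma b" "sigma b" 1] unfolding R_def by simp_all
qed

lemma sigma_mult: "sigma (a * b) = sigma a * sigma b"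
proof (cases "b = 0")
  case True then show ?thesis using sigma_0 by simp
next
  case bnz: False
  define Q where "Q = sm x (a * b) + sm y b + z"
  have ne3: "W.point (coords (sigma a) 1 0) \<noteq> W.point (coords 0 0 1)" by (rule point_coords_neI) auto
  then have fne3: "f (V.point (sm x a + y)) \<noteq> f (V.point z)" using image_sigma_xy[of a] fz_coords by simp
  have eqQ1: "Q = sm (sm x a + y) b + sm z 1" unfolding Q_def by simp
  have dQ: "in_dom Q" using in_dom_comb[OF in_dom_sigma_xy[of a] in_dom_z fne3 bnz, of 1] eqQ1 by simp
  obtain n1 n2 where q1: "coords (sigma a * n1) n1 n2 \<noteq> 0" "f (V.point Q) = W.point (coords (sigma a * n1) n1 n2)"
    using image_in_span2_coords[OF in_dom_sigma_xy[of a] in_dom_z image_ne_point_ne[OF fne3] image_sigma_xy[of a]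
        fz_coords coords_nonzero(8) coords_nonzero(3) eqQ1 dQ] by auto
  have "W.point (coords (sigma b) (sigma b) 1) \<noteq> W.point (coords 1 0 0)" by (rule point_coords_neI) auto
  then have ne4: "V.point (sm x b + sm y b + z) \<noteq> V.point x" using image_sigma_diag[OF bnz] fx_coords by auto
  have eqQ2: "Q = sm (sm x b + sm y b + z) 1 + sm x (a * b - b)" unfolding Q_def by (simp add: algebra_simps)
  obtain p1 p2 where q2: "f (V.point Q) = W.point (coords (sigma b * p1 + p2) (sigma b * p1) p1)"
    using image_in_span2_coords[OF in_dom_sigma_diag[OF bnz] in_dom_x ne4 image_sigma_diag[OF bnz] fx_coords
        coords_nonzero(11) coords_nonzero(1) eqQ2 dQ] by auto
  have "W.point (coords (sigma (a*b)) 0 1) \<noteq> W.point (coords 0 1 0)" by (rule point_coords_neI) auto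
  then have ne5: "V.point (sm x (a*b) + z) \<noteq> V.point y" using image_sigma_xz[of "a*b"] fy_coords by auto
  have eqQ3: "Q = sm (sm x (a*b) + z) 1 + sm y b" unfolding Q_def by (simp add: algebra_simps)
  obtain s1 s2 where q3: "f (V.point Q) = W.point (coords (sigma (a*b) * s1) s2 s1)"
    using image_in_span2_coords[OF in_dom_sigma_xz[of "a*b"] in_dom_y ne5 image_sigma_xz[of "a*b"] fy_coords
        coords_nonzero(9) coords_nonzero(2) eqQ3 dQ] by auto
  obtain k where k: "k \<noteq> 0" "sigma b * p1 + p2 = sigma a * n1 * k" "sigma b * p1 = n1 * k" "p1 = n2 * k"
    using point_coords_eqE[OF _ q1(1)] q1(2) q2 by metis
  obtain k' where k': "k' \<noteq> 0" "sigma (a*b) * s1 = sigma a * n1 * k'" "s2 = n1 * k'" "s1 = n2 * k'"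
    using point_coords_eqE[OF _ q1(1)] q1(2) q3 by metis
  have "n1 * k = (sigma b * n2) * k" using k by (simp add: mult.assoc)
  then have en: "n1 = sigma b * n2" using k(1) by simp
  then have "n2 \<noteq> 0" using q1 by auto
  have "(sigma (a*b) * n2) * k' = (sigma a * sigma b * n2) * k'" using k' en by (simp add: mult.assoc)
  then have "sigma (a*b) * n2 = (sigma a * sigma b) * n2" using k'(1) mult_cancel_right by blast
  then show ?thesis using \<open>n2 \<noteq> 0\<close> by simp
qed

lemma inj_sigma: "sigma a = sigma b \<Longrightarrow> a = b"
proof (rule ccontr)
  assume e: "sigma a = sigma b" and ab: "a \<noteq> b"
  define pa where "pa = sm x a + y"
  define pb where "pb = sm x b + y"
  have da: "in_dom pa" and db: "in_dom pb" using in_dom_sigma_xy unfolding pa_def pb_def by blast+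
  have fab: "f (V.point pa) = f (V.point pb)" using image_sigma_xy[of a] image_sigma_xy[of b] e unfolding pa_def pb_def by simp
  have fne: "f (V.point x) \<noteq> f (V.point y)" using point_100_ne_010 fx_coords fy_coords by simp
  have nxy: "V.point x \<noteq> V.point y" using fne by auto
  have npab: "V.point pa \<noteq> V.point pb"
  proof
    assume "V.point pa = V.point pb"
    then obtain k where "pb = sm pa k" using V.point_eq_iff da by metis
    then have "sm x b + sm y 1 = sm x (a*k) + sm y k" unfolding pa_def pb_def by simp
    from V.span2_coeffs_unique[OF _ _ nxy this] in_dom_x in_dom_y have "b = a * k" "1 = k" by auto
    then show False using ab by simp
  qed
  define c where "c = inverse (a - b)"
  have "sm pa c + sm pb (-c) = sm x ((a - b) * c)" unfolding pa_def pb_def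
    by (simp add: algebra_simps)
  then have "x = sm pa c + sm pb (-c)" unfolding c_def using ab by simp
  then have "x \<in> V.span2 pa pb" by (metis V.span2_mem)
  then have "f (V.point x) = f (V.point pa)" using collapsed_line_constant[OF da db npab fab] in_dom_x by blast
  moreover have "W.point (coords (sigma a) 1 0) \<noteq> W.point (coords 1 0 0)" by (rule point_coords_neI) auto
  ultimately show False using image_sigma_xy[of a] fx_coords unfolding pa_def by simp
qed

lemma ring_mono_sigma: "ring_mono sigma"
  unfolding ring_mono_def using inj_sigma sigma_add sigma_mult sigma_1 by (auto intro: injI)

lemma line_image_in_sigma_points: assumes sj: "surj sigma"
  and "Q \<in> pjoin sm' {f (V.point x)} {f (V.point y)}"
  shows "Q = f (V.point x) \<or> (\<exists>a. in_dom (sm x a + y) \<and> Q = f (V.point (sm x a + y)))"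
proof -
  have "Q \<in> pjoin sm' {W.point x'} {W.point y'}" using assms(2) fx fy by simp
  then obtain q where q: "q \<noteq> 0" "q \<in> W.span2 x' y'" "Q = W.point q"
    unfolding W.pjoin_points by blast
  obtain c d where "q = sm' x' c + sm' y' d" using q(2) by (auto elim: W.span2_memE)
  then have qc: "q = coords c d 0" unfolding coords_def by simp
  show ?thesis
  proof (cases "d = 0")
    case True
    then have "c \<noteq> 0" using q qc by simp
    then have "Q = W.point (coords 1 0 0)" using q qc True point_coords_scale[of c 1 0 0] by simp
    then show ?thesis using fx_coords by simp
  next
    case False
    then have "coords c d 0 = coords ((c * inverse d) * d) (1*d) (0*d)" by (simp add: mult.assoc)
    then have "Q = W.point (coords (c * inverse d) 1 0)"
      using q qc point_coords_scale[OF False, of "c * inverse d" 1 0] by simp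
    moreover obtain a where "c * inverse d = sigma a" using sj by (metis surjD)
    ultimately show ?thesis using in_dom_sigma_xy[of a] image_sigma_xy[of a] by auto
  qed
qed

end

context weak_linear_map begin

lemma frame_exists: assumes "in_dom x" "in_dom y" "in_dom z" "f (V.point x) \<noteq> f (V.point y)"
  "f (V.point z) \<notin> pjoin sm' {f (V.point x)} {f (V.point y)}"
  shows "\<exists>x' y' z'. frame sm sm' D f x y z x' y' z'"
proof -
  obtain x' where x': "x' \<noteq> 0" "f (V.point x) = W.point x'" using image_point assms(1) by blast
  obtain y0 where y0: "y0 \<noteq> 0" "f (V.point y) = W.point y0" using image_point assms(2) by blast
  have "f (V.point x) \<in> pjoin sm' {f (V.point x)} {f (V.point y)}"
    using W.point_in_pjoin[OF x'(1) W.left_in_span2[of x' y0]] x' y0 by simp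
  then have fxz: "f (V.point x) \<noteq> f (V.point z)" using assms(5) by auto
  obtain y' where y': "y' \<noteq> 0" "f (V.point y) = W.point y'" "f (V.point (x + y)) = W.point (x' + y')"
    using normalize_image[OF assms(1,2,4) x'(2,1)] by blast
  obtain z' where z': "z' \<noteq> 0" "f (V.point z) = W.point z'" "f (V.point (x + z)) = W.point (x' + z')"
    using normalize_image[OF assms(1,3) fxz x'(2,1)] by blast
  have "z' \<notin> W.span2 x' y'"
  proof
    assume "z' \<in> W.span2 x' y'"
    then have "W.point z' \<in> pjoin sm' {W.point x'} {W.point y'}" using W.point_in_pjoin z'(1) by blast
    then show False using assms(5) x' y' z' by simp
  qed
  then have "W.independent3 x' y' z'" unfolding W.independent3_def using x' y' assms(4) by auto
  then have "frame sm sm' D f x y z x' y' z'"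
    by (intro frame.intro weak_linear_map_axioms frame_axioms.intro) (use assms x' y' z' in auto)
  then show ?thesis by blast
qed

end

locale weak_linear_map_triangle = weak_linear_map sm sm' D f
  for sm :: "'v::ab_group_add \<Rightarrow> 'k::division_ring \<Rightarrow> 'v"
    and sm' :: "'w::ab_group_add \<Rightarrow> 'k2::division_ring \<Rightarrow> 'w"
    and D :: "'v set set" and f :: "'v set \<Rightarrow> 'w set" +
  assumes triangle_in_image: "\<exists>A\<in>f ` D. \<exists>B\<in>f ` D. \<exists>C\<in>f ` D. triangle sm' A B C"
    and monos_surj: "\<forall>g :: 'k \<Rightarrow> 'k2. ring_mono g \<longrightarrow> surj g"
begin

lemma image_point_ne: obtains z where "in_dom z" "f (V.point z) \<noteq> P"
proof -
  obtain A B C where AB: "A \<in> f ` D" "B \<in> f ` D" and "triangle sm' A B C"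
    using triangle_in_image by blast
  then have "A \<noteq> B" by (simp add: triangle_def)
  then obtain Z where "Z \<in> D" "f Z \<noteq> P" using AB by blast
  then show thesis using that dom_point by blast
qed

lemma image_point_off_line:
  assumes "in_dom x" "in_dom y"
  obtains z where "in_dom z" "f (V.point z) \<notin> pjoin sm' {f (V.point x)} {f (V.point y)}"
proof -
  obtain A B C where ABC: "A \<in> f ` D" "B \<in> f ` D" "C \<in> f ` D" "triangle sm' A B C"
    using triangle_in_image by blast
  have "f (V.point x) \<in> proj_points sm'" "f (V.point y) \<in> proj_points sm'"
    using partial_map_f assms unfolding partial_map_def by auto
  then obtain P where "P \<in> {A, B, C}" "P \<notin> pjoin sm' {f (V.point x)} {f (V.point y)}"
    using W.triangle_not_on_line[OF ABC(4)] by blast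
  then obtain Z where "Z \<in> D" "f Z \<notin> pjoin sm' {f (V.point x)} {f (V.point y)}" using ABC by blast
  then show thesis using that dom_point by blast
qed

lemma image_line_onto:
  assumes "in_dom x" "in_dom y" "f (V.point x) \<noteq> f (V.point y)"
    and "Q \<in> pjoin sm' {f (V.point x)} {f (V.point y)}"
  shows "Q = f (V.point x) \<or> (\<exists>a. in_dom (sm x a + y) \<and> Q = f (V.point (sm x a + y)))"
proof -
  obtain z where "in_dom z" "f (V.point z) \<notin> pjoin sm' {f (V.point x)} {f (V.point y)}"
    using image_point_off_line assms(1,2) by blast
  then obtain x' y' z' where "frame sm sm' D f x y z x' y' z'"
    using frame_exists assms(1-3) by blast
  then interpret frame sm sm' D f x y z x' y' z' .
  have "surj sigma" using monos_surj ring_mono_sigma by blast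
  then show ?thesis using line_image_in_sigma_points assms(4) by blast
qed

lemma image_line_subset:
  assumes "X \<in> D" "Y \<in> D" "f X \<noteq> f Y"
  shows "pjoin sm' {f X} {f Y} \<subseteq> pimg D f (pjoin sm {X} {Y})"
proof
  fix Q assume Q: "Q \<in> pjoin sm' {f X} {f Y}"
  obtain x y where x: "in_dom x" "X = V.point x" and y: "in_dom y" "Y = V.point y"
    using dom_point assms(1,2) by blast
  have "X \<in> pjoin sm {X} {Y}" using V.point_in_pjoin[of x x y] V.left_in_span2 x y by simp
  moreover have "V.point (sm x a + y) \<in> pjoin sm {X} {Y}" if "sm x a + y \<noteq> 0" for a
    using V.point_in_pjoin[OF that, of x y] V.span2_mem[of x a y 1] x y by simp
  ultimately show "Q \<in> pimg D f (pjoin sm {X} {Y})"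
    using image_line_onto[of x y Q] Q x y assms unfolding pimg_def by blast
qed

lemma image_pjoin_eq:
  assumes XY: "X \<in> proj_points sm" "Y \<in> proj_points sm" "X \<noteq> Y"
  shows "pimg D f (pjoin sm {X} {Y}) = pjoin sm' (pimg D f {X}) (pimg D f {Y})"
proof
  show "pimg D f (pjoin sm {X} {Y}) \<subseteq> pjoin sm' (pimg D f {X}) (pimg D f {Y})"
    using weak_linear_f XY unfolding weak_linear_def by blast
  obtain x where x: "x \<noteq> 0" "X = V.point x" using XY(1) V.proj_points_iff by blast
  obtain y where y: "y \<noteq> 0" "Y = V.point y" using XY(2) V.proj_points_iff by blast
  have "X \<in> pjoin sm {X} {Y}" using V.point_in_pjoin[OF x(1) V.left_in_span2[of x y]] x y by simp
  then have X: "f X \<in> pimg D f (pjoin sm {X} {Y})" if "X \<in> D" using that by (simp add: pimg_def)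
  have "Y \<in> pjoin sm {X} {Y}" using V.point_in_pjoin[OF y(1) V.right_in_span2[of y x]] x y by simp
  then have Y: "f Y \<in> pimg D f (pjoin sm {X} {Y})" if "Y \<in> D" using that by (simp add: pimg_def)
  have image: "\<exists>r. r \<noteq> 0 \<and> f Z = W.point r" if "Z \<in> D" for Z
    using dom_point[OF that] image_point that by blast
  show "pjoin sm' (pimg D f {X}) (pimg D f {Y}) \<subseteq> pimg D f (pjoin sm {X} {Y})"
  proof (cases "X \<in> D"; cases "Y \<in> D")
    assume XD: "X \<in> D" and YD: "Y \<in> D"
    show ?thesis
    proof (cases "f X = f Y")
      case True
      obtain r where "r \<noteq> 0" "f X = W.point r" using image XD by blast
      then have "pjoin sm' {f X} {f Y} = {f X}" using True W.pjoin_point_self by simp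
      then show ?thesis using X XD YD by (simp add: pimg_singleton)
    next
      case False
      then show ?thesis using image_line_subset XD YD by (simp add: pimg_singleton)
    qed
  next
    assume XD: "X \<in> D" and YD: "Y \<notin> D"
    obtain r where "r \<noteq> 0" "f X = W.point r" using image XD by blast
    then have "pjoin sm' {f X} {} = {f X}" using W.pjoin_point_empty by simp
    then show ?thesis using X XD YD by (simp add: pimg_singleton)
  next
    assume XD: "X \<notin> D" and YD: "Y \<in> D"
    obtain r where "r \<noteq> 0" "f Y = W.point r" using image YD by blast
    then have "pjoin sm' {} {f Y} = {f Y}" using W.pjoin_empty_point by simp
    then show ?thesis using Y XD YD by (simp add: pimg_singleton)
  next
    assume "X \<notin> D" "Y \<notin> D"
    then show ?thesis using W.pjoin_empty_empty by (simp add: pimg_singleton)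
  qed
qed

lemma collapsed_line_meets_exceptional:
  assumes XD: "X \<in> D" and YD: "Y \<in> D" and "X \<noteq> Y" "f X = f Y"
  shows "\<exists>Z\<in>pjoin sm {X} {Y}. Z \<in> proj_points sm - D"
proof (rule ccontr)
  assume no_exceptional: "\<not> ?thesis"
  obtain x y where x: "in_dom x" "X = V.point x" and y: "in_dom y" "Y = V.point y"
    using dom_point XD YD by blast
  have line_in_D: "in_dom p" if "p \<noteq> 0" "p \<in> V.span2 x y" for p
    using no_exceptional V.point_in_pjoin[OF that] V.point_in_proj_points[OF that(1)] that(1) x y by blast
  have nxy: "V.point x \<noteq> V.point y" and fxy: "f (V.point x) = f (V.point y)"
    using assms x y by auto
  obtain z where z: "in_dom z" "f (V.point z) \<noteq> f (V.point x)" using image_point_ne by blast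
  have zn: "z \<notin> V.span2 x y"
    using collapsed_line_constant[OF x(1) y(1) nxy fxy] line_in_D z by blast
  have independent: "V.independent3 x y z" unfolding V.independent3_def using x y nxy zn by blast
  have fyz: "f (V.point y) \<noteq> f (V.point z)" using z fxy by simp
  have ld: "in_dom (y + z)" "f (V.point (y + z)) \<noteq> f (V.point y)"
    using line_in_dom[OF y(1) z(1) fyz, of 1 1 "y + z"] by simp_all
  have "f (V.point (y + z)) \<in> pjoin sm' (pimg D f {V.point y}) (pimg D f {V.point z})"
    using image_in_pjoin[of y z "y + z"] y z image_ne_point_ne[OF fyz] ld V.span2_mem[of y 1 z 1] by simp
  then have "f (V.point (y + z)) \<in> pjoin sm' {f (V.point x)} {f (V.point z)}"
    using y z fxy by (simp add: pimg_singleton)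
  then obtain a where a: "in_dom (sm x a + z)" "f (V.point (y + z)) = f (V.point (sm x a + z))"
    using image_line_onto[OF x(1) z(1)] z ld fxy by metis
  have npt: "V.point (y + z) \<noteq> V.point (sm x a + z)"
  proof
    assume "V.point (y + z) = V.point (sm x a + z)"
    then obtain k where "sm x a + z = sm (y + z) k" using V.point_eq_iff ld by metis
    then have "sm x a + sm y 0 + sm z 1 = sm x 0 + sm y k + sm z k" by simp
    from V.span3_coeffs_unique[OF independent this] show False by (metis zero_neq_one)
  qed
  define p where "p = sm x (-a) + sm y 1"
  have "p \<noteq> 0" unfolding p_def using V.independent2[OF _ _ nxy, of "-a" 1] x y by auto
  moreover have p_line: "p \<in> V.span2 x y" unfolding p_def by (rule V.span2_mem)
  ultimately have p: "in_dom p" using line_in_D by blast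
  have "p = sm (y + z) 1 + sm (sm x a + z) (-1)" unfolding p_def by (simp add: algebra_simps)
  then have "f (V.point p) = f (V.point (y + z))"
    using collapsed_line_constant[OF ld(1) a(1) npt a(2)] V.span2_mem p by metis
  moreover have "f (V.point p) = f (V.point x)"
    using collapsed_line_constant[OF x(1) y(1) nxy fxy p_line p] .
  ultimately show False using ld fxy by simp
qed

end

theorem corollary3:
  fixes sm :: "'v::ab_group_add \<Rightarrow> 'k::division_ring \<Rightarrow> 'v"
    and sm' :: "'w::ab_group_add \<Rightarrow> 'k2::division_ring \<Rightarrow> 'w"
    and D :: "'v set set" and f :: "'v set \<Rightarrow> 'w set"
  assumes "right_vs sm" and "right_vs sm'"
    and "partial_map sm sm' D f"
    and "weak_linear sm sm' D f"
    and "\<exists>A\<in>f ` D. \<exists>B\<in>f ` D. \<exists>C\<in>f ` D. triangle sm' A B C"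
    and "\<forall>g :: 'k \<Rightarrow> 'k2. ring_mono g \<longrightarrow> surj g"
  shows "linear_map sm sm' D f"
proof -
  interpret weak_linear_map_triangle sm sm' D f
    using assms by unfold_locales (simp_all add: right_vector_space_def)
  show ?thesis
    unfolding linear_map_def using image_pjoin_eq collapsed_line_meets_exceptional by blast
qed

end
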